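(* Let $\mathfrak g=\mathfrak g(V,\omega,D)$ be a generalized oscillator algebra and let $\lambda=(z^*,\alpha,t^* )\in\mathfrak g'$ be such that the coadjoint orbit $\mathcal O_\lambda$ is semi-equicontinuous. Suppose there exists $(z,x,t)$ in the interior $B(\mathcal O_\lambda)^0$ of $B(\mathcal O_\lambda)$ with $z^*t>0$. Then: (i) the symmetric bilinear form $Q:V\times V\to\mathbb R$, $Q(v,w):=\omega(Dv,w)$, is positive definite; (ii) $D^*\alpha=\alpha\circ D$ and all linear forms $i_x\omega=\omega(x,\cdot)$, $x\in V$, are $Q$-continuous, and $x\mapsto\|i_x\omega\|_Q$ is bounded on some $0$-neighborhood in $V$.
   Context: $(V,\omega)$ is a real locally convex space with a continuous non-degenerate alternating bilinear form $\omega$; $\gamma:\mathbb R\to\mathrm{Sp}(V,\omega)$ is a one-parameter group defining a smooth action of $\mathbb R$ on $V$, with generator $D=\gamma'(0)$. The generalized oscillator group $G=G(V,\omega,\gamma)=\mathbb R\times V\times\mathbb R$ has multiplication $(z,v,t)(z',v',t')=(z+z'+\frac12\omega(v,\gamma(t)v'),v+\gamma(t)v',t+t')$, and its Lie algebra $\mathfrak g(V,\omega,D)=\mathbb R\times V\times\mathbb R$ has bracket $[(z,v,t),(z',v',t')]=(\omega(v,v'),tDv'-t'Dv,0)$. Elements of $\mathfrak g'$ are written $\lambda=(z^*,\alpha,t^* )$ with $z^*,t^*\in\mathbb R$, $\alpha\in V'$, meaning $\lambda(z,x,t)=z^*z+\alpha(x)+t^*t$. Coadjoint orbits are $\mathcal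 O_\lambda=\mathrm{Ad}^*(G)\lambda$, $\mathrm{Ad}^*(g)\lambda=\lambda\circ\mathrm{Ad}(g)^{-1}$. For $E\subseteq\mathfrak g'$, $s_E(y)=\sup\langle E,-y\rangle$; $E$ is semi-equicontinuous if $s_E$ is bounded on a neighborhood of some point; $B(E)=\{y\in\mathfrak g:\inf\langle E,y\rangle>-\infty\}$. A linear form $\beta$ on $V$ is $Q$-continuous if $\|\beta\|_Q:=\sup\{\beta(v):Q(v,v)\le1\}<\infty$. *)

theory Defs
  imports "HOL-Analysis.Analysis"
begin

definition locally_convex_space :: "('v::{real_vector,topological_space}) itself \<Rightarrow> bool" where
  "locally_convex_space _ \<longleftrightarrow>
     continuous_on UNIV (\<lambda>p::'v \<times> 'v. fst p + snd p) \<and>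
     continuous_on UNIV (\<lambda>p::real \<times> 'v. fst p *\<^sub>R snd p) \<and>
     (\<forall>U::'v set. open U \<and> 0 \<in> U \<longrightarrow> (\<exists>W. open W \<and> 0 \<in> W \<and> convex W \<and> W \<subseteq> U))"

definition symplectic_form :: "('v::{real_vector,topological_space} \<Rightarrow> 'v \<Rightarrow> real) \<Rightarrow> bool" where
  "symplectic_form \<omega> \<longleftrightarrow> bilinear \<omega> \<and> (\<forall>v. \<omega> v v = 0) \<and>
     continuous_on UNIV (\<lambda>p. \<omega> (fst p) (snd p)) \<and>
     (\<forall>v. (\<forall>w. \<omega> v w = 0) \<longrightarrow> v = 0)"

definition Sp :: "('v::{real_vector,topological_space} \<Rightarrow> 'v \<Rightarrow> real) \<Rightarrow> ('v \<Rightarrow> 'v) set" where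
  "Sp \<omega> = {A. linear A \<and> bij A \<and> continuous_on UNIV A \<and> continuous_on UNIV (inv A) \<and>
              (\<forall>v w. \<omega> (A v) (A w) = \<omega> v w)}"

text \<open>Iterated directional derivatives: ddiff f k x h = d^k f(x)(h 0, ..., h (k-1)).\<close>
fun ddiff :: "('e::{real_vector,topological_space} \<Rightarrow> 'f::{real_vector,topological_space})
              \<Rightarrow> nat \<Rightarrow> 'e \<Rightarrow> (nat \<Rightarrow> 'e) \<Rightarrow> 'f" where
  "ddiff f 0 x h = f x"
| "ddiff f (Suc k) x h =
     (THE y. ((\<lambda>s. (1 / s) *\<^sub>R (ddiff f k (x + s *\<^sub>R h k) h - ddiff f k x h)) \<longlongrightarrow> y) (at 0))"

text \<open>f is smooth (C^infinity in the sense of Bastiani / Michal) on the whole space: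
  all iterated directional derivatives exist and are jointly continuous.\<close>
definition smooth_map :: "('e::{real_vector,topological_space} \<Rightarrow> 'f::{real_vector,topological_space}) \<Rightarrow> bool" where
  "smooth_map f \<longleftrightarrow> (\<forall>k.
     (\<forall>x h. ((\<lambda>s. (1 / s) *\<^sub>R (ddiff f k (x + s *\<^sub>R h k) h - ddiff f k x h)) \<longlongrightarrow> ddiff f (Suc k) x h) (at 0)) \<and>
     continuous_on UNIV (\<lambda>p :: 'e \<times> (nat \<Rightarrow> 'e). ddiff f k (fst p) (snd p)))"

definition smooth_sp_action :: "('v::{real_vector,topological_space} \<Rightarrow> 'v \<Rightarrow> real) \<Rightarrow> (real \<Rightarrow> 'v \<Rightarrow> 'v) \<Rightarrow> bool" where
  "smooth_sp_action \<omega> \<gamma> \<longleftrightarrow> (\<forall>t. \<gamma> t \<in> Sp \<omega>) \<and> \<gamma> 0 = id \<and>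
     (\<forall>s t. \<gamma> (s + t) = \<gamma> s \<circ> \<gamma> t) \<and> smooth_map (\<lambda>p :: real \<times> 'v. \<gamma> (fst p) (snd p))"

definition generator :: "(real \<Rightarrow> 'v \<Rightarrow> 'v) \<Rightarrow> 'v::{real_vector,topological_space} \<Rightarrow> 'v" where
  "generator \<gamma> v = (THE w. ((\<lambda>s. (1 / s) *\<^sub>R (\<gamma> s v - v)) \<longlongrightarrow> w) (at 0))"

definition osc_mult :: "('v::real_vector \<Rightarrow> 'v \<Rightarrow> real) \<Rightarrow> (real \<Rightarrow> 'v \<Rightarrow> 'v)
    \<Rightarrow> real \<times> 'v \<times> real \<Rightarrow> real \<times> 'v \<times> real \<Rightarrow> real \<times> 'v \<times> real" where
  "osc_mult \<omega> \<gamma> g g' = (case g of (z, v, t) \<Rightarrow> case g' of (z', v', t') \<Rightarrow>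
      (z + z' + (1/2) * \<omega> v (\<gamma> t v'), v + \<gamma> t v', t + t'))"

definition osc_inv :: "('v::real_vector \<Rightarrow> 'v \<Rightarrow> real) \<Rightarrow> (real \<Rightarrow> 'v \<Rightarrow> 'v)
    \<Rightarrow> real \<times> 'v \<times> real \<Rightarrow> real \<times> 'v \<times> real" where
  "osc_inv \<omega> \<gamma> g = (THE h. osc_mult \<omega> \<gamma> g h = (0, 0, 0))"

definition osc_conj :: "('v::real_vector \<Rightarrow> 'v \<Rightarrow> real) \<Rightarrow> (real \<Rightarrow> 'v \<Rightarrow> 'v)
    \<Rightarrow> real \<times> 'v \<times> real \<Rightarrow> real \<times> 'v \<times> real \<Rightarrow> real \<times> 'v \<times> real" where
  "osc_conj \<omega> \<gamma> g h = osc_mult \<omega> \<gamma> (osc_mult \<omega> \<gamma> g h) (osc_inv \<omega> \<gamma> g)"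

text \<open>Adjoint action: Ad(g) = d(conj_g)(1), the Lie algebra being identified with
  R x V x R via the global coordinates (identity = (0,0,0)).\<close>
definition osc_Ad :: "('v::{real_vector,topological_space} \<Rightarrow> 'v \<Rightarrow> real) \<Rightarrow> (real \<Rightarrow> 'v \<Rightarrow> 'v)
    \<Rightarrow> real \<times> 'v \<times> real \<Rightarrow> real \<times> 'v \<times> real \<Rightarrow> real \<times> 'v \<times> real" where
  "osc_Ad \<omega> \<gamma> g y = (THE w. ((\<lambda>s. (1 / s) *\<^sub>R
       (osc_conj \<omega> \<gamma> g (s *\<^sub>R y) - osc_conj \<omega> \<gamma> g (0, 0, 0))) \<longlongrightarrow> w) (at 0))"

definition lform :: "real \<Rightarrow> ('v \<Rightarrow> real) \<Rightarrow> real \<Rightarrow> real \<times> 'v \<times> real \<Rightarrow> real" where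
  "lform zs \<alpha> ts y = (case y of (z, x, t) \<Rightarrow> zs * z + \<alpha> x + ts * t)"

definition coadjoint_orbit :: "('v::{real_vector,topological_space} \<Rightarrow> 'v \<Rightarrow> real) \<Rightarrow> (real \<Rightarrow> 'v \<Rightarrow> 'v)
    \<Rightarrow> (real \<times> 'v \<times> real \<Rightarrow> real) \<Rightarrow> (real \<times> 'v \<times> real \<Rightarrow> real) set" where
  "coadjoint_orbit \<omega> \<gamma> l = {l \<circ> inv (osc_Ad \<omega> \<gamma> g) | g. True}"

definition support_fun :: "('a \<Rightarrow> real) set \<Rightarrow> 'a::uminus \<Rightarrow> ereal" where
  "support_fun E y = (SUP \<mu>\<in>E. ereal (\<mu> (- y)))"

definition semi_equicontinuous :: "('a::{uminus,topological_space} \<Rightarrow> real) set \<Rightarrow> bool" where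
  "semi_equicontinuous E \<longleftrightarrow>
     (\<exists>p U C. open U \<and> p \<in> U \<and> (\<forall>y\<in>U. \<bar>support_fun E y\<bar> \<le> ereal C))"

definition Bset :: "('a \<Rightarrow> real) set \<Rightarrow> 'a set" where
  "Bset E = {y. (INF \<mu>\<in>E. ereal (\<mu> y)) > -\<infinity>}"

definition Q_norm :: "('v \<Rightarrow> 'v \<Rightarrow> real) \<Rightarrow> ('v \<Rightarrow> real) \<Rightarrow> ereal" where
  "Q_norm Q \<beta> = (SUP v\<in>{v. Q v v \<le> 1}. ereal (\<beta> v))"

definition Q_continuous :: "('v \<Rightarrow> 'v \<Rightarrow> real) \<Rightarrow> ('v \<Rightarrow> real) \<Rightarrow> bool" where
  "Q_continuous Q \<beta> \<longleftrightarrow> Q_norm Q \<beta> < \<infinity>"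

end

theory Submission
  imports Defs
begin

text \<open>For \<open>u \<in> V\<close> the orbit contains \<open>\<lambda> \<circ> Ad(0, u, 0)\<close>. Evaluated at \<open>(z\<^sub>0, x\<^sub>0 + w, t\<^sub>0)\<close>
  with \<open>u = c v\<close> it is a quadratic polynomial in \<open>c\<close> with leading coefficient
  \<open>z\<^sup>* t\<^sub>0 Q(v, v) / 2\<close> and linear coefficient \<open>z\<^sup>* \<omega>(v, x\<^sub>0 + w) - t\<^sub>0 \<alpha>(D v)\<close>.
  Semi-equicontinuity and the interior point \<open>(z\<^sub>0, x\<^sub>0, t\<^sub>0)\<close> of \<open>B(O\<^sub>\<lambda>)\<close> bound all these
  polynomials from below, uniformly for \<open>w\<close> near \<open>0\<close>. A quadratic polynomial bounded below has
  nonnegative leading coefficient, and zero linear coefficient if the leading one vanishes; by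
  non-degeneracy of \<open>\<omega>\<close> this makes \<open>Q\<close> positive definite. Evaluating at \<open>c = \<plusminus>1\<close> bounds the
  linear coefficients on the \<open>Q\<close>-unit ball, which gives the \<open>Q\<close>-continuity of \<open>i\<^sub>x\<omega>\<close> and \<open>D\<^sup>*\<alpha>\<close>.\<close>

lemma nonneg_quadratic_imp_leading_coeff_nonneg:
  fixes A B E :: real
  assumes nonneg: "\<And>c. 0 \<le> A + B * c + E * c\<^sup>2"
  shows "0 \<le> E"
proof (rule ccontr)
  assume "\<not> 0 \<le> E"
  hence E: "E < 0" by simp
  define c where "c = 1 + (\<bar>A\<bar> + \<bar>B\<bar>) / (- E)"
  have c1: "1 \<le> c" unfolding c_def using E by (simp add: divide_nonneg_neg)
  have Ec: "E * c = E - \<bar>A\<bar> - \<bar>B\<bar>" unfolding c_def using E by (simp add: field_simps)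
  have "E * c\<^sup>2 = c * (E - \<bar>A\<bar> - \<bar>B\<bar>)" by (simp add: power2_eq_square Ec[symmetric] ac_simps)
  also have "\<dots> \<le> E - \<bar>A\<bar> - c * \<bar>B\<bar>"
    using mult_right_mono_neg[OF c1 less_imp_le[OF E]] mult_right_mono[OF c1, of "\<bar>A\<bar>"]
    by (simp add: algebra_simps)
  finally have "A + B * c + E * c\<^sup>2 \<le> A + B * c + E - \<bar>A\<bar> - c * \<bar>B\<bar>" by simp
  also have "\<dots> < 0"
  proof -
    have "c * B \<le> c * \<bar>B\<bar>" using c1 by (simp add: mult_left_mono)
    thus ?thesis using E abs_ge_self[of A] by (simp add: mult.commute)
  qed
  finally show False using nonneg[of c] by simp
qed

lemma nonneg_affine_imp_slope_zero:
  fixes A B :: real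
  assumes nonneg: "\<And>c. 0 \<le> A + B * c"
  shows "B = 0"
proof (rule ccontr)
  assume B: "B \<noteq> 0"
  have "0 \<le> A + B * (- (\<bar>A\<bar> + 1) / B)" by (rule nonneg)
  also have "\<dots> = A - \<bar>A\<bar> - 1" using B by (simp add: field_simps)
  finally show False by simp
qed

lemma abs_Q_norm_le:
  assumes "\<And>v. Q v v \<le> 1 \<Longrightarrow> \<beta> v \<le> B" and "Q 0 0 \<le> 1" and "\<beta> 0 = 0"
  shows "\<bar>Q_norm Q \<beta>\<bar> \<le> ereal B"
proof -
  have "Q_norm Q \<beta> \<le> ereal B"
    unfolding Q_norm_def using assms(1) by (auto intro!: SUP_least)
  moreover have "0 \<le> Q_norm Q \<beta>"
    unfolding Q_norm_def using assms(2,3) SUP_upper[of 0 "{v. Q v v \<le> 1}" "\<lambda>v. ereal (\<beta> v)"]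
    by (simp add: zero_ereal_def)
  ultimately show ?thesis by simp
qed

lemma Q_continuousI:
  assumes "\<And>v. Q v v \<le> 1 \<Longrightarrow> \<beta> v \<le> B" and "Q 0 0 \<le> 1" and "\<beta> 0 = 0"
  shows "Q_continuous Q \<beta>"
  using abs_Q_norm_le[of Q \<beta> B] assms unfolding Q_continuous_def
  by (cases "Q_norm Q \<beta>") auto

lemma continuous_on_UNIV_slice1:
  "continuous_on UNIV g \<Longrightarrow> continuous_on UNIV (\<lambda>x. g (x, y))"
  by (rule continuous_on_compose2[of UNIV g]) (auto intro: continuous_intros)

lemma continuous_on_UNIV_slice2:
  "continuous_on UNIV g \<Longrightarrow> continuous_on UNIV (\<lambda>y. g (x, y))"
  by (rule continuous_on_compose2[of UNIV g]) (auto intro: continuous_intros)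

lemma open_contains_positive_point:
  fixes f :: "real \<Rightarrow> 'a::topological_space"
  assumes "open T" and "continuous_on UNIV f" and "f 0 \<in> T"
  obtains e where "0 < e" and "f e \<in> T"
proof -
  have "open (f -` T)" by (rule open_vimage[OF assms(1,2)])
  then obtain d where d: "0 < d" "ball 0 d \<subseteq> f -` T" using assms(3) by (meson openE vimageI2)
  have "d/2 \<in> ball 0 d" using d(1) by (simp add: dist_real_def)
  hence "f (d/2) \<in> T" using d(2) by blast
  with d(1) show ?thesis using that[of "d/2"] by simp
qed

text \<open>Semi-equicontinuity bounds the forms of \<open>E\<close> from below on a neighbourhood \<open>U\<close> of \<open>p\<close>;
  writing \<open>q + y\<close> as a convex combination of a point \<open>r = q + \<epsilon>(q - p)\<close> of \<open>B(E)\<close> and a point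
  \<open>p + k y\<close> of \<open>U\<close> propagates a uniform lower bound to a neighbourhood of the interior point \<open>q\<close>.\<close>

lemma lower_bound_near_interior_Bset:
  fixes E :: "('a::{real_vector,topological_space} \<Rightarrow> real) set"
  assumes U: "open U" "p \<in> U" "\<And>y. y \<in> U \<Longrightarrow> \<bar>support_fun E y\<bar> \<le> ereal C"
    and q: "q \<in> interior (Bset E)"
    and line_cont: "continuous_on UNIV (\<lambda>e::real. q + e *\<^sub>R (q - p))"
  obtains k M where "\<And>\<mu> y. \<mu> \<in> E \<Longrightarrow> linear \<mu> \<Longrightarrow> p + k *\<^sub>R y \<in> U \<Longrightarrow> - M \<le> \<mu> (q + y)"
proof -
  have bound_U: "- C \<le> \<mu> y" if "\<mu> \<in> E" "linear \<mu>" "y \<in> U" for \<mu> y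
  proof -
    have "ereal (\<mu> (- y)) \<le> support_fun E y"
      unfolding support_fun_def using that(1) by (rule SUP_upper)
    also have "\<dots> \<le> ereal C" using U(3)[OF that(3)] by (cases "support_fun E y") auto
    finally show ?thesis using linear_neg[OF that(2)] by simp
  qed
  obtain T where T: "open T" "q \<in> T" "T \<subseteq> Bset E" using q by (meson interiorE)
  obtain \<epsilon> where \<epsilon>: "0 < \<epsilon>" "q + \<epsilon> *\<^sub>R (q - p) \<in> T"
    using open_contains_positive_point[OF T(1) line_cont] T(2) by auto
  define r where "r = q + \<epsilon> *\<^sub>R (q - p)"
  have "- \<infinity> < (INF \<mu>\<in>E. ereal (\<mu> r))" using \<epsilon>(2) T(3) unfolding r_def Bset_def by auto
  then obtain Mr where Mr: "ereal Mr \<le> (INF \<mu>\<in>E. ereal (\<mu> r))"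
    by (cases "INF \<mu>\<in>E. ereal (\<mu> r)") auto
  have bound_r: "Mr \<le> \<mu> r" if "\<mu> \<in> E" for \<mu>
    using order.trans[OF Mr INF_lower[OF that]] by simp
  define k where "k = (1 + \<epsilon>) / \<epsilon>"
  show ?thesis
  proof
    fix \<mu> y assume \<mu>: "\<mu> \<in> E" "linear \<mu>" and y: "p + k *\<^sub>R y \<in> U"
    have "(1 + \<epsilon>) * \<mu> (q + y) = \<mu> r + \<epsilon> * \<mu> (p + k *\<^sub>R y)"
      unfolding r_def k_def using \<epsilon>(1)
      by (simp add: linear_add[OF \<mu>(2)] linear_diff[OF \<mu>(2)] linear_scale[OF \<mu>(2)] field_simps)
    also have "\<dots> \<ge> Mr - \<epsilon> * C"
      using bound_r[OF \<mu>(1)] mult_left_mono[OF bound_U[OF \<mu> y], of \<epsilon>] \<epsilon>(1) by simp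
    finally show "- ((\<epsilon> * C - Mr) / (1 + \<epsilon>)) \<le> \<mu> (q + y)"
      using \<epsilon>(1) by (simp add: field_simps)
  qed
qed

section \<open>The symplectic space and the generator of the action\<close>

locale oscillator_data =
  fixes \<omega> :: "'v::{real_vector,topological_space} \<Rightarrow> 'v \<Rightarrow> real"
    and \<gamma> :: "real \<Rightarrow> 'v \<Rightarrow> 'v"
  assumes locally_convex: "locally_convex_space TYPE('v)"
    and symplectic: "symplectic_form \<omega>"
    and action: "smooth_sp_action \<omega> \<gamma>"
begin

abbreviation D :: "'v \<Rightarrow> 'v" where "D \<equiv> generator \<gamma>"

lemma bilinear_omega: "bilinear \<omega>"
  using symplectic by (simp add: symplectic_form_def)

lemma omega_self [simp]: "\<omega> v v = 0"
  using symplectic by (simp add: symplectic_form_def)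

lemma omega_nondegenerate: "(\<And>w. \<omega> v w = 0) \<Longrightarrow> v = 0"
  using symplectic by (simp add: symplectic_form_def)

lemma omega_antisym: "\<omega> a b = - \<omega> b a"
proof -
  have "0 = \<omega> (a + b) (a + b)" by simp
  also have "\<dots> = \<omega> a a + \<omega> b a + (\<omega> a b + \<omega> b b)"
    unfolding bilinear_ladd[OF bilinear_omega] bilinear_radd[OF bilinear_omega] ..
  finally show ?thesis by simp
qed

lemma continuous_on_omega_left: "continuous_on UNIV (\<lambda>v. \<omega> v w)"
  using continuous_on_UNIV_slice1[of "\<lambda>p. \<omega> (fst p) (snd p)"] symplectic
  by (simp add: symplectic_form_def)

lemma continuous_on_omega_right: "continuous_on UNIV (\<lambda>w. \<omega> v w)"
  using continuous_on_UNIV_slice2[of "\<lambda>p. \<omega> (fst p) (snd p)"] symplectic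
  by (simp add: symplectic_form_def)

lemma continuous_on_add_left: "continuous_on UNIV (\<lambda>x::'v. a + x)"
  using continuous_on_UNIV_slice2[of "\<lambda>p::'v \<times> 'v. fst p + snd p"] locally_convex
  by (simp add: locally_convex_space_def)

lemma continuous_on_scaleR_right: "continuous_on UNIV (\<lambda>x::'v. c *\<^sub>R x)"
  using continuous_on_UNIV_slice2[of "\<lambda>p::real \<times> 'v. fst p *\<^sub>R snd p"] locally_convex
  by (simp add: locally_convex_space_def)

lemma continuous_on_scaleR_left: "continuous_on UNIV (\<lambda>c. c *\<^sub>R (x::'v))"
  using continuous_on_UNIV_slice1[of "\<lambda>p::real \<times> 'v. fst p *\<^sub>R snd p"] locally_convex
  by (simp add: locally_convex_space_def)

lemma open_0_absorbing:
  fixes x :: 'v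
  assumes "open V" and "0 \<in> V"
  obtains c where "0 < c" and "c *\<^sub>R x \<in> V"
  using open_contains_positive_point[OF assms(1) continuous_on_scaleR_left] assms(2) by auto

text \<open>No separation axiom is assumed on \<open>'v\<close>: limits are unique because the continuous form
  \<open>\<omega>\<close> separates points.\<close>

lemma tendsto_unique_omega:
  fixes f :: "'b \<Rightarrow> 'v"
  assumes "F \<noteq> bot" and "(f \<longlongrightarrow> a) F" and "(f \<longlongrightarrow> b) F"
  shows "a = b"
proof -
  have "\<omega> (a - b) w = 0" for w
  proof -
    have "((\<lambda>x. \<omega> (f x) w) \<longlongrightarrow> \<omega> a w) F" "((\<lambda>x. \<omega> (f x) w) \<longlongrightarrow> \<omega> b w) F"
      using assms(2,3) by (auto intro: continuous_on_tendsto_compose[OF continuous_on_omega_left])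
    hence "\<omega> a w = \<omega> b w" using assms(1) tendsto_unique by blast
    thus ?thesis by (simp add: bilinear_lsub[OF bilinear_omega])
  qed
  thus ?thesis using omega_nondegenerate by fastforce
qed

lemma tendsto_unique_triple:
  fixes f :: "'b \<Rightarrow> real \<times> 'v \<times> real"
  assumes "F \<noteq> bot" and "(f \<longlongrightarrow> a) F" and "(f \<longlongrightarrow> b) F"
  shows "a = b"
proof -
  have "fst a = fst b"
    using tendsto_fst[OF assms(2)] tendsto_fst[OF assms(3)] assms(1) tendsto_unique by blast
  moreover have "fst (snd a) = fst (snd b)"
    using tendsto_unique_omega[OF assms(1) tendsto_fst[OF tendsto_snd[OF assms(2)]]
        tendsto_fst[OF tendsto_snd[OF assms(3)]]] .
  moreover have "snd (snd a) = snd (snd b)"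
    using tendsto_snd[OF tendsto_snd[OF assms(2)]] tendsto_snd[OF tendsto_snd[OF assms(3)]]
      assms(1) tendsto_unique by blast
  ultimately show ?thesis by (simp add: prod_eq_iff)
qed

lemma linear_gamma: "linear (\<gamma> t)"
  using action by (simp add: smooth_sp_action_def Sp_def)

lemma gamma_0 [simp]: "\<gamma> 0 v = v"
  using action by (simp add: smooth_sp_action_def)

lemma gamma_gamma: "\<gamma> s (\<gamma> t v) = \<gamma> (s + t) v"
  using action by (simp add: smooth_sp_action_def)

lemma omega_gamma [simp]: "\<omega> (\<gamma> t a) (\<gamma> t b) = \<omega> a b"
  using action by (simp add: smooth_sp_action_def Sp_def)

lemma gamma_add: "\<gamma> t (a + b) = \<gamma> t a + \<gamma> t b"
  using linear_gamma linear_add by blast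

lemma gamma_scaleR: "\<gamma> t (c *\<^sub>R v) = c *\<^sub>R \<gamma> t v"
  using linear_gamma linear_scale by blast

lemma gamma_minus: "\<gamma> t (- v) = - \<gamma> t v"
  using linear_gamma linear_neg by blast

text \<open>The first directional derivative of the smooth action at \<open>(0, v)\<close> in direction \<open>(1, 0)\<close>
  is the difference quotient defining \<open>D v\<close>.\<close>

lemma generator_tendsto: "((\<lambda>s. (1/s) *\<^sub>R (\<gamma> s v - v)) \<longlongrightarrow> D v) (at 0)"
proof -
  let ?f = "\<lambda>p :: real \<times> 'v. \<gamma> (fst p) (snd p)"
  let ?h = "\<lambda>_::nat. (1::real, 0::'v)"
  have "smooth_map ?f" using action by (simp add: smooth_sp_action_def)
  hence "((\<lambda>s. (1/s) *\<^sub>R (ddiff ?f 0 ((0, v) + s *\<^sub>R ?h 0) ?h - ddiff ?f 0 (0, v) ?h))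
           \<longlongrightarrow> ddiff ?f (Suc 0) (0, v) ?h) (at 0)"
    unfolding smooth_map_def by (elim allE[of _ 0] conjE allE[of _ "(0, v)"] allE[of _ ?h])
  hence lim: "((\<lambda>s. (1/s) *\<^sub>R (\<gamma> s v - v)) \<longlongrightarrow> ddiff ?f (Suc 0) (0, v) ?h) (at 0)" by simp
  have "D v = ddiff ?f (Suc 0) (0, v) ?h"
    unfolding generator_def using tendsto_unique_omega[OF trivial_limit_at _ lim] lim by blast
  with lim show ?thesis by simp
qed

lemma generator_tendsto_scaled: "((\<lambda>s. (1/s) *\<^sub>R (\<gamma> (s * t) v - v)) \<longlongrightarrow> t *\<^sub>R D v) (at 0)"
proof (cases "t = 0")
  case False
  have "filterlim (\<lambda>s::real. s * t) (at 0) (at 0)"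
    using False by (auto intro!: filterlim_atI tendsto_eq_intros simp: eventually_at_filter)
  from filterlim_compose[OF generator_tendsto this]
  have "((\<lambda>s. (1 / (s * t)) *\<^sub>R (\<gamma> (s * t) v - v)) \<longlongrightarrow> D v) (at 0)" by simp
  hence "((\<lambda>s. t *\<^sub>R ((1 / (s * t)) *\<^sub>R (\<gamma> (s * t) v - v))) \<longlongrightarrow> t *\<^sub>R D v) (at 0)"
    by (rule continuous_on_tendsto_compose[OF continuous_on_scaleR_right]) auto
  moreover have "t *\<^sub>R ((1 / (s * t)) *\<^sub>R x) = (1/s) *\<^sub>R x" for s and x :: 'v
    using False by (cases "s = 0") simp_all
  ultimately show ?thesis by (simp only:)
qed simp

lemma omega_generator_tendsto_left:
  "((\<lambda>s. (1/s) * (\<omega> (\<gamma> s v) w - \<omega> v w)) \<longlongrightarrow> \<omega> (D v) w) (at 0)"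
  using continuous_on_tendsto_compose[OF continuous_on_omega_left generator_tendsto]
  by (simp add: bilinear_lmul[OF bilinear_omega] bilinear_lsub[OF bilinear_omega])

lemma omega_generator_tendsto_right:
  "((\<lambda>s. (1/s) * (\<omega> y (\<gamma> (s * t) u) - \<omega> y u)) \<longlongrightarrow> t * \<omega> y (D u)) (at 0)"
  using continuous_on_tendsto_compose[OF continuous_on_omega_right generator_tendsto_scaled]
  by (simp add: bilinear_rmul[OF bilinear_omega] bilinear_rsub[OF bilinear_omega])

lemma generator_eqI:
  assumes "\<And>w. ((\<lambda>s. (1/s) * (\<omega> (\<gamma> s v) w - \<omega> v w)) \<longlongrightarrow> \<omega> u w) (at 0)"
  shows "D v = u"
proof -
  have "\<omega> (D v) w = \<omega> u w" for w
    using tendsto_unique[OF trivial_limit_at omega_generator_tendsto_left assms] .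
  hence "\<omega> (D v - u) w = 0" for w by (simp add: bilinear_lsub[OF bilinear_omega])
  thus ?thesis using omega_nondegenerate by fastforce
qed

lemma linear_generator: "linear D"
proof (rule linearI)
  fix a b show "D (a + b) = D a + D b"
  proof (rule generator_eqI)
    fix w
    have "((\<lambda>s. (1/s) * (\<omega> (\<gamma> s a) w - \<omega> a w) + (1/s) * (\<omega> (\<gamma> s b) w - \<omega> b w))
            \<longlongrightarrow> \<omega> (D a) w + \<omega> (D b) w) (at 0)"
      by (intro tendsto_add omega_generator_tendsto_left)
    thus "((\<lambda>s. (1/s) * (\<omega> (\<gamma> s (a + b)) w - \<omega> (a + b) w)) \<longlongrightarrow> \<omega> (D a + D b) w) (at 0)"
      by (simp add: gamma_add bilinear_ladd[OF bilinear_omega] algebra_simps)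
  qed
next
  fix c a show "D (c *\<^sub>R a) = c *\<^sub>R D a"
  proof (rule generator_eqI)
    fix w
    have "((\<lambda>s. c * ((1/s) * (\<omega> (\<gamma> s a) w - \<omega> a w))) \<longlongrightarrow> c * \<omega> (D a) w) (at 0)"
      by (intro tendsto_mult_left omega_generator_tendsto_left)
    thus "((\<lambda>s. (1/s) * (\<omega> (\<gamma> s (c *\<^sub>R a)) w - \<omega> (c *\<^sub>R a) w)) \<longlongrightarrow> \<omega> (c *\<^sub>R D a) w) (at 0)"
      by (simp add: gamma_scaleR bilinear_lmul[OF bilinear_omega] algebra_simps)
  qed
qed

text \<open>Since \<open>\<gamma>\<close> preserves \<open>\<omega>\<close>, moving \<open>\<gamma> s\<close> to the other slot turns it into \<open>\<gamma> (-s)\<close>.\<close>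

lemma generator_symmetric: "\<omega> (D v) w = \<omega> (D w) v"
proof -
  have "\<omega> (\<gamma> s v) w = \<omega> v (\<gamma> (s * -1) w)" for s
    using omega_gamma[of s v "\<gamma> (s * -1) w"] by (simp add: gamma_gamma)
  with omega_generator_tendsto_right[of v "-1" w]
  have "((\<lambda>s. (1/s) * (\<omega> (\<gamma> s v) w - \<omega> v w)) \<longlongrightarrow> -1 * \<omega> v (D w)) (at 0)" by simp
  hence "\<omega> (D v) w = - \<omega> v (D w)"
    using tendsto_unique[OF trivial_limit_at omega_generator_tendsto_left] by fastforce
  thus ?thesis using omega_antisym[of v "D w"] by simp
qed

lemma bilinear_generator_form: "bilinear (\<lambda>v w. \<omega> (D v) w)"
  using bilinear_omega linear_compose[OF linear_generator, of "\<lambda>x. \<omega> x _"]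
  by (simp add: bilinear_def o_def)

section \<open>The adjoint action of the elements \<open>(0, u, 0)\<close>\<close>

definition Ad_vec :: "'v \<Rightarrow> real \<times> 'v \<times> real \<Rightarrow> real \<times> 'v \<times> real" where
  "Ad_vec u y = (case y of (z, x, t) \<Rightarrow> (z + \<omega> u x - t/2 * \<omega> u (D u), x - t *\<^sub>R D u, t))"

lemma osc_inv_vec: "osc_inv \<omega> \<gamma> (0, u, 0) = (0, - u, 0)"
  unfolding osc_inv_def
proof (rule the_equality)
  show "osc_mult \<omega> \<gamma> (0, u, 0) (0, - u, 0) = (0, 0, 0)"
    by (simp add: osc_mult_def bilinear_rneg[OF bilinear_omega])
  fix h assume h: "osc_mult \<omega> \<gamma> (0, u, 0) h = (0, 0, 0)"
  obtain a b c where abc: "h = (a, b, c)" by (cases h)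
  from h have "c = 0" "b = - u" "a + 1/2 * \<omega> u b = 0"
    by (auto simp: abc osc_mult_def add_eq_0_iff)
  thus "h = (0, - u, 0)" using abc by (simp add: bilinear_rneg[OF bilinear_omega])
qed

lemma osc_conj_vec:
  "osc_conj \<omega> \<gamma> (0, u, 0) (z, x, t) =
     (z + 1/2 * \<omega> u x + 1/2 * \<omega> (u + x) (\<gamma> t (- u)), u + x + \<gamma> t (- u), t)"
  by (simp add: osc_conj_def osc_inv_vec osc_mult_def)

lemma osc_Ad_vec_tendsto:
  "((\<lambda>s. (1/s) *\<^sub>R (osc_conj \<omega> \<gamma> (0, u, 0) (s *\<^sub>R y) - osc_conj \<omega> \<gamma> (0, u, 0) (0, 0, 0)))
     \<longlongrightarrow> Ad_vec u y) (at 0)"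
proof -
  obtain z x t where y: "y = (z, x, t)" by (cases y)
  have nz: "\<forall>\<^sub>F s in at (0::real). s \<noteq> 0" by (simp add: eventually_at_filter)
  define P where "P s = (1/s) * (\<omega> u (\<gamma> (s * t) u) - \<omega> u u)" for s
  define R where "R s = (1/s) * (\<omega> x (\<gamma> (s * t) u) - \<omega> x u)" for s
  have "((\<lambda>s. z + 1/2 * \<omega> u x - 1/2 * P s - 1/2 * (\<omega> x u + s * R s))
          \<longlongrightarrow> z + 1/2 * \<omega> u x - 1/2 * (t * \<omega> u (D u)) - 1/2 * (\<omega> x u + 0 * (t * \<omega> x (D u)))) (at 0)"
    unfolding P_def R_def by (intro tendsto_intros omega_generator_tendsto_right)
  also have "z + 1/2 * \<omega> u x - 1/2 * (t * \<omega> u (D u)) - 1/2 * (\<omega> x u + 0 * (t * \<omega> x (D u)))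
      = z + \<omega> u x - t/2 * \<omega> u (D u)"
    using omega_antisym[of x u] by simp
  finally have "((\<lambda>s. z + 1/2 * \<omega> u x - 1/2 * P s - 1/2 * (\<omega> x u + s * R s))
      \<longlongrightarrow> z + \<omega> u x - t/2 * \<omega> u (D u)) (at 0)" .
  moreover have "\<forall>\<^sub>F s in at 0. z + 1/2 * \<omega> u x - 1/2 * P s - 1/2 * (\<omega> x u + s * R s)
     = (1/s) * (s * z + 1/2 * \<omega> u (s *\<^sub>R x) + 1/2 * \<omega> (u + s *\<^sub>R x) (\<gamma> (s * t) (- u)))"
    using nz by eventually_elim
      (simp add: P_def R_def gamma_minus bilinear_ladd[OF bilinear_omega] bilinear_lmul[OF bilinear_omega]
        bilinear_rmul[OF bilinear_omega] bilinear_rneg[OF bilinear_omega] field_simps)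
  ultimately have first: "((\<lambda>s. (1/s) * (s * z + 1/2 * \<omega> u (s *\<^sub>R x) + 1/2 * \<omega> (u + s *\<^sub>R x) (\<gamma> (s * t) (- u))))
      \<longlongrightarrow> z + \<omega> u x - t/2 * \<omega> u (D u)) (at 0)"
    by (rule Lim_transform_eventually)
  have "((\<lambda>s. x + (-1) *\<^sub>R ((1/s) *\<^sub>R (\<gamma> (s * t) u - u))) \<longlongrightarrow> x + (-1) *\<^sub>R (t *\<^sub>R D u)) (at 0)"
    by (intro continuous_on_tendsto_compose[OF continuous_on_add_left]
        continuous_on_tendsto_compose[OF continuous_on_scaleR_right] generator_tendsto_scaled) auto
  moreover have "\<forall>\<^sub>F s in at 0. x + (-1) *\<^sub>R ((1/s) *\<^sub>R (\<gamma> (s * t) u - u))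
     = (1/s) *\<^sub>R (u + s *\<^sub>R x + \<gamma> (s * t) (- u))"
    using nz by eventually_elim (simp add: gamma_minus algebra_simps)
  ultimately have second: "((\<lambda>s. (1/s) *\<^sub>R (u + s *\<^sub>R x + \<gamma> (s * t) (- u))) \<longlongrightarrow> x - t *\<^sub>R D u) (at 0)"
    by (auto elim: Lim_transform_eventually)
  have third: "((\<lambda>s. (1/s) * (s * t)) \<longlongrightarrow> t) (at 0)"
    by (rule Lim_transform_eventually[OF tendsto_const]) (use nz in eventually_elim, simp)
  have "osc_conj \<omega> \<gamma> (0, u, 0) (0, 0, 0) = 0"
    by (simp add: osc_conj_vec bilinear_rneg[OF bilinear_omega] bilinear_rzero[OF bilinear_omega]
        linear_0[OF linear_gamma] zero_prod_def)
  with tendsto_Pair[OF first tendsto_Pair[OF second third]] show ?thesis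
    by (simp add: y Ad_vec_def osc_conj_vec bilinear_rmul[OF bilinear_omega])
qed

lemma osc_Ad_vec: "osc_Ad \<omega> \<gamma> (0, u, 0) = Ad_vec u"
proof
  fix y show "osc_Ad \<omega> \<gamma> (0, u, 0) y = Ad_vec u y"
    unfolding osc_Ad_def using tendsto_unique_triple[OF trivial_limit_at _ osc_Ad_vec_tendsto]
    by (blast intro: osc_Ad_vec_tendsto)
qed

lemma Ad_vec_minus_inverse: "Ad_vec (- u) (Ad_vec u y) = y"
  by (cases y) (simp add: Ad_vec_def linear_neg[OF linear_generator] bilinear_lneg[OF bilinear_omega]
      bilinear_rneg[OF bilinear_omega] bilinear_rsub[OF bilinear_omega]
      bilinear_rmul[OF bilinear_omega] algebra_simps)

lemma comp_Ad_vec_in_orbit: "l \<circ> Ad_vec u \<in> coadjoint_orbit \<omega> \<gamma> l"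
proof -
  have "inv (Ad_vec (- u)) = Ad_vec u"
    by (rule inv_unique_comp) (auto simp: fun_eq_iff Ad_vec_minus_inverse intro: Ad_vec_minus_inverse[of "- u", simplified])
  hence "l \<circ> Ad_vec u = l \<circ> inv (osc_Ad \<omega> \<gamma> (0, - u, 0))" by (simp add: osc_Ad_vec)
  thus ?thesis unfolding coadjoint_orbit_def by blast
qed

lemma linear_Ad_vec: "linear (Ad_vec u)"
  by (rule linearI) (auto simp: Ad_vec_def bilinear_radd[OF bilinear_omega]
      bilinear_rmul[OF bilinear_omega] algebra_simps split: prod.splits)

lemma linear_lform: "linear \<alpha> \<Longrightarrow> linear (lform zs \<alpha> ts)"
  by (rule linearI) (auto simp: lform_def linear_add linear_scale algebra_simps split: prod.splits)

lemma lform_Ad_vec_scaleR: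
  assumes "linear \<alpha>"
  shows "lform zs \<alpha> ts (Ad_vec (c *\<^sub>R v) (z0, x0 + w, t0)) =
    (zs * z0 + \<alpha> x0 + \<alpha> w + ts * t0) + (zs * \<omega> v (x0 + w) - t0 * \<alpha> (D v)) * c
      + zs * t0 / 2 * \<omega> (D v) v * c\<^sup>2"
  using omega_antisym[of v "D v"]
  by (simp add: Ad_vec_def lform_def linear_scale[OF linear_generator] linear_add[OF assms]
      linear_diff[OF assms] linear_scale[OF assms] bilinear_lmul[OF bilinear_omega]
      bilinear_rmul[OF bilinear_omega] algebra_simps power2_eq_square)

lemma continuous_on_line: "continuous_on UNIV (\<lambda>e::real. a + e *\<^sub>R (b :: real \<times> 'v \<times> real))"
proof -
  obtain a1 a2 a3 b1 b2 b3 where ab: "a = (a1, a2, a3)" "b = (b1, b2, b3)" by (cases a, cases b) auto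
  have "continuous_on UNIV (\<lambda>e::real. a2 + e *\<^sub>R b2)"
    using continuous_on_compose[OF continuous_on_scaleR_left continuous_on_subset[OF continuous_on_add_left]]
    by (simp add: o_def)
  thus ?thesis by (simp add: ab) (auto intro!: continuous_on_Pair continuous_intros)
qed

lemma continuous_on_vec_embedding: "continuous_on UNIV (\<lambda>w. p + k *\<^sub>R (0::real, w::'v, 0::real))"
proof -
  obtain p1 p2 p3 where p: "p = (p1, p2, p3)" by (cases p)
  have "continuous_on UNIV (\<lambda>w. p2 + k *\<^sub>R w)"
    using continuous_on_compose[OF continuous_on_scaleR_right continuous_on_subset[OF continuous_on_add_left]]
    by (simp add: o_def)
  thus ?thesis by (simp add: p) (auto intro!: continuous_on_Pair continuous_intros)
qed

lemma orbit_lower_bound: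
  assumes "linear \<alpha>"
    and "semi_equicontinuous (coadjoint_orbit \<omega> \<gamma> (lform zs \<alpha> ts))"
    and "(z0, x0, t0) \<in> interior (Bset (coadjoint_orbit \<omega> \<gamma> (lform zs \<alpha> ts)))"
  obtains V M where "open V" and "0 \<in> V"
    and "\<And>u w. w \<in> V \<Longrightarrow> - M \<le> lform zs \<alpha> ts (Ad_vec u (z0, x0 + w, t0))"
proof -
  let ?O = "coadjoint_orbit \<omega> \<gamma> (lform zs \<alpha> ts)"
  obtain p U C where U: "open U" "p \<in> U" "\<And>y. y \<in> U \<Longrightarrow> \<bar>support_fun ?O y\<bar> \<le> ereal C"
    using assms(2) unfolding semi_equicontinuous_def by blast
  obtain k M where low: "\<And>\<mu> y. \<mu> \<in> ?O \<Longrightarrow> linear \<mu> \<Longrightarrow> p + k *\<^sub>R y \<in> U \<Longrightarrow> - M \<le> \<mu> ((z0, x0, t0) + y)"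
    using lower_bound_near_interior_Bset[OF U assms(3) continuous_on_line] by blast
  show ?thesis
  proof
    show "open ((\<lambda>w. p + k *\<^sub>R (0, w, 0)) -` U)"
      by (rule open_vimage[OF U(1) continuous_on_vec_embedding])
    show "0 \<in> (\<lambda>w. p + k *\<^sub>R (0, w, 0)) -` U"
      using U(2) by (simp add: zero_prod_def[symmetric])
    fix u w assume "w \<in> (\<lambda>w. p + k *\<^sub>R (0, w, 0)) -` U"
    hence "- M \<le> (lform zs \<alpha> ts \<circ> Ad_vec u) ((z0, x0, t0) + (0, w, 0))"
      by (intro low comp_Ad_vec_in_orbit linear_compose[OF linear_Ad_vec linear_lform[OF assms(1)]]) simp
    thus "- M \<le> lform zs \<alpha> ts (Ad_vec u (z0, x0 + w, t0))" by simp
  qed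
qed

lemma orbit_quadratic_bound:
  assumes "linear \<alpha>" and "continuous_on UNIV \<alpha>"
    and "semi_equicontinuous (coadjoint_orbit \<omega> \<gamma> (lform zs \<alpha> ts))"
    and "(z0, x0, t0) \<in> interior (Bset (coadjoint_orbit \<omega> \<gamma> (lform zs \<alpha> ts)))"
  obtains V K R where "open V" and "0 \<in> V" and "\<And>w. w \<in> V \<Longrightarrow> \<bar>K w\<bar> \<le> R"
    and "\<And>w v c. w \<in> V \<Longrightarrow>
      0 \<le> K w + (zs * \<omega> v (x0 + w) - t0 * \<alpha> (D v)) * c + zs * t0 / 2 * \<omega> (D v) v * c\<^sup>2"
proof -
  obtain V M where V: "open V" "0 \<in> V"
    and low: "\<And>u w. w \<in> V \<Longrightarrow> - M \<le> lform zs \<alpha> ts (Ad_vec u (z0, x0 + w, t0))"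
    using orbit_lower_bound[OF assms(1,3,4)] by blast
  let ?K0 = "zs * z0 + \<alpha> x0 + ts * t0 + M"
  show ?thesis
  proof
    show "open (V \<inter> \<alpha> -` {-1<..<1})" by (intro open_Int V(1) open_vimage[OF _ assms(2)]) simp
    show "0 \<in> V \<inter> \<alpha> -` {-1<..<1}" using V(2) linear_0[OF assms(1)] by simp
    show "\<bar>?K0 + \<alpha> w\<bar> \<le> \<bar>?K0\<bar> + 1" if "w \<in> V \<inter> \<alpha> -` {-1<..<1}" for w
      using that by auto
    show "0 \<le> ?K0 + \<alpha> w + (zs * \<omega> v (x0 + w) - t0 * \<alpha> (D v)) * c + zs * t0 / 2 * \<omega> (D v) v * c\<^sup>2"
      if "w \<in> V \<inter> \<alpha> -` {-1<..<1}" for w v c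
      using low[of w "c *\<^sub>R v"] that unfolding lform_Ad_vec_scaleR[OF assms(1)] by simp
  qed
qed

section \<open>Consequences of a uniform quadratic lower bound\<close>

context
  fixes V :: "'v set" and K \<beta> :: "'v \<Rightarrow> real" and R a b t :: real and x0 :: 'v
  assumes V_open: "open V" and V_0: "0 \<in> V"
    and a_pos: "0 < a" and b_nonzero: "b \<noteq> 0" and t_nonzero: "t \<noteq> 0"
    and K_bounded: "\<And>w. w \<in> V \<Longrightarrow> \<bar>K w\<bar> \<le> R"
    and quadratic_nonneg:
      "\<And>w v c. w \<in> V \<Longrightarrow> 0 \<le> K w + (b * \<omega> v (x0 + w) - t * \<beta> v) * c + a * \<omega> (D v) v * c\<^sup>2"
begin

lemma generator_form_nonneg: "0 \<le> \<omega> (D v) v"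
  using nonneg_quadratic_imp_leading_coeff_nonneg[OF quadratic_nonneg[OF V_0]] a_pos
  by (simp add: zero_le_mult_iff)

lemma linear_coeff_eq_0_if_generator_form_eq_0:
  assumes "\<omega> (D v) v = 0" and "w \<in> V"
  shows "b * \<omega> v (x0 + w) - t * \<beta> v = 0"
  by (rule nonneg_affine_imp_slope_zero[of "K w"]) (use quadratic_nonneg[OF assms(2), of v] assms(1) in simp)

lemma generator_form_pos:
  assumes "v \<noteq> 0"
  shows "0 < \<omega> (D v) v"
proof (rule ccontr)
  assume "\<not> 0 < \<omega> (D v) v"
  hence Q0: "\<omega> (D v) v = 0" using generator_form_nonneg[of v] by simp
  have "\<omega> v w = 0" for w
  proof -
    obtain c where c: "0 < c" "c *\<^sub>R w \<in> V" using open_0_absorbing[OF V_open V_0] .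
    have "b * \<omega> v (c *\<^sub>R w) = 0"
      using linear_coeff_eq_0_if_generator_form_eq_0[OF Q0 c(2)] linear_coeff_eq_0_if_generator_form_eq_0[OF Q0 V_0]
      by (simp add: bilinear_radd[OF bilinear_omega] algebra_simps)
    thus ?thesis using c(1) b_nonzero by (simp add: bilinear_rmul[OF bilinear_omega])
  qed
  thus False using omega_nondegenerate assms by blast
qed

lemma linear_coeff_bounded:
  assumes "w \<in> V" and "\<omega> (D v) v \<le> 1"
  shows "\<bar>b * \<omega> v (x0 + w) - t * \<beta> v\<bar> \<le> R + a"
proof -
  have "0 \<le> K w + (b * \<omega> v (x0 + w) - t * \<beta> v) + a * \<omega> (D v) v"
    and "0 \<le> K w - (b * \<omega> v (x0 + w) - t * \<beta> v) + a * \<omega> (D v) v"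
    using quadratic_nonneg[OF assms(1), of v 1] quadratic_nonneg[OF assms(1), of v "-1"] by simp_all
  moreover have "a * \<omega> (D v) v \<le> a" using assms(2) a_pos by simp
  ultimately show ?thesis using K_bounded[OF assms(1)] by (simp add: abs_le_iff)
qed

lemma omega_bounded_near_0:
  assumes "w \<in> V" and "\<omega> (D v) v \<le> 1"
  shows "\<bar>\<omega> w v\<bar> \<le> 2 * (R + a) / \<bar>b\<bar>"
proof -
  have "\<bar>b * \<omega> v w\<bar> \<le> 2 * (R + a)"
    using linear_coeff_bounded[OF assms] linear_coeff_bounded[OF V_0 assms(2)]
    by (simp add: bilinear_radd[OF bilinear_omega] abs_le_iff algebra_simps)
  thus ?thesis using b_nonzero omega_antisym[of w v] by (simp add: abs_mult field_simps)
qed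

lemma omega_bounded:
  obtains B where "\<And>v. \<omega> (D v) v \<le> 1 \<Longrightarrow> \<bar>\<omega> x v\<bar> \<le> B"
proof -
  obtain c where c: "0 < c" "c *\<^sub>R x \<in> V" using open_0_absorbing[OF V_open V_0] .
  have "\<bar>\<omega> x v\<bar> \<le> 2 * (R + a) / \<bar>b\<bar> / c" if "\<omega> (D v) v \<le> 1" for v
  proof -
    have "c * \<bar>\<omega> x v\<bar> \<le> 2 * (R + a) / \<bar>b\<bar>"
      using omega_bounded_near_0[OF c(2) that] c(1) by (simp add: bilinear_lmul[OF bilinear_omega] abs_mult)
    thus ?thesis using c(1) by (subst pos_le_divide_eq) (simp_all add: mult.commute)
  qed
  thus ?thesis using that by blast
qed

lemma generator_form_0: "\<omega> (D 0) 0 = 0"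
  by (simp add: bilinear_rzero[OF bilinear_omega])

lemma Q_continuous_omega: "Q_continuous (\<lambda>v w. \<omega> (D v) w) (\<omega> x)"
proof -
  obtain B where "\<And>v. \<omega> (D v) v \<le> 1 \<Longrightarrow> \<bar>\<omega> x v\<bar> \<le> B" using omega_bounded[where x = x] by blast
  thus ?thesis
    by (intro Q_continuousI[where B = B]) (auto simp: generator_form_0 bilinear_rzero[OF bilinear_omega] intro: abs_le_D1)
qed

lemma Q_norm_omega_bounded_near_0:
  "x \<in> V \<Longrightarrow> \<bar>Q_norm (\<lambda>v w. \<omega> (D v) w) (\<omega> x)\<bar> \<le> ereal (2 * (R + a) / \<bar>b\<bar>)"
  using omega_bounded_near_0
  by (intro abs_Q_norm_le) (auto simp: generator_form_0 bilinear_rzero[OF bilinear_omega] abs_le_iff)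

lemma Q_continuous_linear_coeff: "Q_continuous (\<lambda>v w. \<omega> (D v) w) \<beta>"
proof -
  obtain B where B: "\<And>v. \<omega> (D v) v \<le> 1 \<Longrightarrow> \<bar>\<omega> x0 v\<bar> \<le> B" using omega_bounded[where x = x0] by blast
  have "\<bar>\<beta> v\<bar> \<le> (\<bar>b\<bar> * B + R + a) / \<bar>t\<bar>" if "\<omega> (D v) v \<le> 1" for v
  proof -
    have "\<bar>t * \<beta> v\<bar> \<le> \<bar>b * \<omega> v x0\<bar> + \<bar>b * \<omega> v x0 - t * \<beta> v\<bar>" by linarith
    also have "\<dots> \<le> \<bar>b\<bar> * B + (R + a)"
      using linear_coeff_bounded[OF V_0 that] mult_left_mono[OF B[OF that], of "\<bar>b\<bar>"] omega_antisym[of v x0]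
      by (simp add: abs_mult)
    finally show ?thesis using t_nonzero by (simp add: abs_mult field_simps)
  qed
  moreover have "\<beta> 0 = 0"
    using linear_coeff_eq_0_if_generator_form_eq_0[OF generator_form_0 V_0] t_nonzero
    by (simp add: bilinear_lzero[OF bilinear_omega])
  ultimately show ?thesis
    by (intro Q_continuousI[where B = "(\<bar>b\<bar> * B + R + a) / \<bar>t\<bar>"]) (auto simp: generator_form_0 intro: abs_le_D1)
qed

end

end

theorem lemma2p6:
  fixes \<omega> :: "'v::{real_vector,topological_space} \<Rightarrow> 'v \<Rightarrow> real"
    and \<gamma> :: "real \<Rightarrow> 'v \<Rightarrow> 'v"
    and zs ts :: real and \<alpha> :: "'v \<Rightarrow> real"
  assumes "locally_convex_space TYPE('v)"
    and "symplectic_form \<omega>"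
    and "smooth_sp_action \<omega> \<gamma>"
    and "linear \<alpha>" and "continuous_on UNIV \<alpha>"
    and "semi_equicontinuous (coadjoint_orbit \<omega> \<gamma> (lform zs \<alpha> ts))"
    and "\<exists>z x t. (z, x, t) \<in> interior (Bset (coadjoint_orbit \<omega> \<gamma> (lform zs \<alpha> ts))) \<and> zs * t > 0"
  shows "bilinear (\<lambda>v w. \<omega> (generator \<gamma> v) w)
         \<and> (\<forall>v w. \<omega> (generator \<gamma> v) w = \<omega> (generator \<gamma> w) v)
         \<and> (\<forall>v. v \<noteq> 0 \<longrightarrow> \<omega> (generator \<gamma> v) v > 0)
         \<and> Q_continuous (\<lambda>v w. \<omega> (generator \<gamma> v) w) (\<alpha> \<circ> generator \<gamma>)
         \<and> (\<forall>x. Q_continuous (\<lambda>v w. \<omega> (generator \<gamma> v) w) (\<omega> x))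
         \<and> (\<exists>U. open U \<and> 0 \<in> U \<and>
           (\<exists>C. \<forall>x\<in>U. \<bar>Q_norm (\<lambda>v w. \<omega> (generator \<gamma> v) w) (\<omega> x)\<bar> \<le> ereal C))"
proof -
  interpret oscillator_data \<omega> \<gamma> using assms(1-3) by unfold_locales
  obtain z0 x0 t0 where interior: "(z0, x0, t0) \<in> interior (Bset (coadjoint_orbit \<omega> \<gamma> (lform zs \<alpha> ts)))"
    and pos: "0 < zs * t0" using assms(7) by blast
  obtain V K R where V: "open V" "0 \<in> V" and K: "\<And>w. w \<in> V \<Longrightarrow> \<bar>K w\<bar> \<le> R"
    and quadratic: "\<And>w v c. w \<in> V \<Longrightarrow>
      0 \<le> K w + (zs * \<omega> v (x0 + w) - t0 * \<alpha> (D v)) * c + zs * t0 / 2 * \<omega> (D v) v * c\<^sup>2"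
    by (fact orbit_quadratic_bound[OF assms(4-6) interior])
  have coeffs: "0 < zs * t0 / 2" "zs \<noteq> 0" "t0 \<noteq> 0" using pos by auto
  note bounds = V coeffs K quadratic
  have "Q_continuous (\<lambda>v w. \<omega> (D v) w) (\<alpha> \<circ> D)"
    using Q_continuous_linear_coeff[OF bounds] by (simp add: o_def)
  moreover have "\<exists>U. open U \<and> 0 \<in> U \<and> (\<exists>C. \<forall>x\<in>U. \<bar>Q_norm (\<lambda>v w. \<omega> (D v) w) (\<omega> x)\<bar> \<le> ereal C)"
    using V Q_norm_omega_bounded_near_0[OF bounds] by blast
  ultimately show ?thesis
    using bilinear_generator_form generator_symmetric generator_form_pos[OF bounds]
      Q_continuous_omega[OF bounds]
    by (intro conjI allI impI) auto
qed

end
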